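(* Let $b>0$ and let $R>0$ be such that, for the functions \[ \begin{aligned} \underline u_{\rm out}(r) &= Lr^{-m} - br^{-l} \log \frac{r}{R},\\ \underline v_{\rm out}(r) &= m(n-2-m)Lr^{-m-2} +\Big[- l(n-2-l) \log \frac{r}{R} + (n-2-2l)\Big]br^{-l-2},\\ \underline w_{\rm out}(r) &= m(m+2)(n-2-m)(n-4-m)Lr^{-m-4} - l(l+2)(n-2-l)(n-4-l)br^{-l-4} \log \frac{r}{R} \\ &\qquad + (n-2-2l)(l+2)(n-4-l) b r^{-l-4}, \end{aligned} \] the numbers $\underline r_1 = \sup\{ r>0 : \underline u_{\rm out}(r) \leqslant 0 \}$, $\underline r_2 = \sup\{ r>0 : \underline v_{\rm out}(r) \leqslant 0 \}$, $\underline r_3 = \sup\{ r>0 : \underline w_{\rm out}(r) \leqslant 0 \}$ are well defined and satisfy $R<\underline r_1<\underline r_2<\underline r_3<+\infty$. Then \[ -\Delta \underline u_{\rm out} = \underline v_{\rm out} \ \text{ for all } r>0,\qquad -\Delta \underline v_{\rm out} = \underline w_{\rm out} \ \text{ for all } r>0,\qquad -\Delta \underline w_{\rm out} \leqslant \underline u_{\rm out}^p \ \text{ for all } r>\underline r_1 . \]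
   Context: Let $n\geqslant 15$ and $p=p_{\mathsf{JL}}(6,n)$, where $p_{\mathsf{JL}}(6,n)=\frac{(n+4)\sqrt{3} - \sqrt{\sqrt[3]{K_0+K_1}+ \sqrt[3]{K_0-K_1} + 3n^2+32 }}{(n-8)\sqrt{3} - \sqrt{\sqrt[3]{K_0+K_1} + \sqrt[3]{K_0-K_1} + 3n^2+32 }}$ with $2K_0 =-27n^6+324 n^5-756n^4-2592 n^3 + 25776 n^2 +5184 n -23744$, $2K_1 = \sqrt{(2K_0)^2 - 4(192n^2+256)^3}$. Let $m=6/(p-1)$, $L=\big(m(m+2)(m+4)(n-2-m)(n-4-m)(n-6-m)\big)^{1/(p-1)}$, let $\lambda_3$ be the smallest positive root of $P(\lambda)=(m+\lambda)(m+\lambda+2)(m+\lambda+4)(n-2-m-\lambda)(n-4-m-\lambda)(n-6-m-\lambda)-pL^{p-1}$, and set $l=m+\lambda_3$. For a function $f$ of $r=|x|$, $\Delta f$ denotes the Laplacian in $\mathbf R^n$ of $x\mapsto f(|x|)$, i.e. $f''+\frac{n-1}{r}f'$. *)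

theory Defs
  imports "HOL-Analysis.Analysis"
begin

definition K0 :: "nat \<Rightarrow> real" where
  "K0 n = (let x = real n in
     (-27*x^6 + 324*x^5 - 756*x^4 - 2592*x^3 + 25776*x^2 + 5184*x - 23744) / 2)"

definition K1 :: "nat \<Rightarrow> real" where
  "K1 n = (let x = real n in sqrt ((2 * K0 n)^2 - 4 * (192*x^2 + 256)^3) / 2)"

definition pJL :: "nat \<Rightarrow> real" where
  "pJL n = (let x = real n;
                S = sqrt (root 3 (K0 n + K1 n) + root 3 (K0 n - K1 n) + 3*x^2 + 32)
            in ((x + 4) * sqrt 3 - S) / ((x - 8) * sqrt 3 - S))"

definition mexp :: "nat \<Rightarrow> real" where
  "mexp n = 6 / (pJL n - 1)"

definition Lc :: "nat \<Rightarrow> real" where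
  "Lc n = (let m = mexp n; x = real n in
     (m*(m+2)*(m+4)*(x-2-m)*(x-4-m)*(x-6-m)) powr (1 / (pJL n - 1)))"

definition Ppoly :: "nat \<Rightarrow> real \<Rightarrow> real" where
  "Ppoly n lam = (let m = mexp n; x = real n in
     (m+lam)*(m+lam+2)*(m+lam+4)*(x-2-m-lam)*(x-4-m-lam)*(x-6-m-lam)
       - pJL n * (Lc n) powr (pJL n - 1))"

definition lam3 :: "nat \<Rightarrow> real" where
  "lam3 n = (LEAST lam. lam > 0 \<and> Ppoly n lam = 0)"

definition lexp :: "nat \<Rightarrow> real" where
  "lexp n = mexp n + lam3 n"

definition rad_lap :: "nat \<Rightarrow> (real \<Rightarrow> real) \<Rightarrow> real \<Rightarrow> real" where
  "rad_lap n f r = deriv (deriv f) r + (real n - 1) / r * deriv f r"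

definition u_out :: "nat \<Rightarrow> real \<Rightarrow> real \<Rightarrow> real \<Rightarrow> real" where
  "u_out n b R r = Lc n * r powr (- mexp n) - b * r powr (- lexp n) * ln (r / R)"

definition v_out :: "nat \<Rightarrow> real \<Rightarrow> real \<Rightarrow> real \<Rightarrow> real" where
  "v_out n b R r = (let m = mexp n; l = lexp n; x = real n in
     m*(x-2-m) * Lc n * r powr (-m-2)
     + (- l*(x-2-l) * ln (r / R) + (x-2-2*l)) * b * r powr (-l-2))"

definition w_out :: "nat \<Rightarrow> real \<Rightarrow> real \<Rightarrow> real \<Rightarrow> real" where
  "w_out n b R r = (let m = mexp n; l = lexp n; x = real n in
     m*(m+2)*(x-2-m)*(x-4-m) * Lc n * r powr (-m-4)
     - l*(l+2)*(x-2-l)*(x-4-l) * b * r powr (-l-4) * ln (r / R)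
     + (x-2-2*l)*(l+2)*(x-4-l) * b * r powr (-l-4))"

end

theory Submission
  imports Defs
begin

(* Writing the square root in pJL as sqrt 3 * sigma, Cardano's formula says that sigma^2 is a
   root of a cubic which forces 0 < sigma < n - 8; then m = (n - 8 - sigma)/2, p = (m + 6)/m, and
   the six factors of p S(m), where S(a) = a(a+2)(a+4)(n-2-a)(n-4-a)(n-6-a) is the symbol of
   (-Delta)^3 on r^-a, pair up into the cubic, giving p S(m) = S((n-6)/2). As S is even about
   (n-6)/2 and increasing below it, lambda_3 = (n-6)/2 - m, i.e. l = (n-6)/2.
   The functions A r^-alpha + (B + C log(r/R)) r^-beta form a family closed under the radial
   Laplacian, which gives -Delta u = v and -Delta v = w by computation, and
   -Delta w = S(m) (L r^(-m-6) - p b r^(-l-6) log(r/R)). This is exactly the tangent line of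
   t |-> t^p at the leading term L r^-m of u, evaluated at u, because (L r^-m)^(p-1) = S(m) r^-6;
   so convexity gives -Delta w <= u^p wherever u > 0, in particular beyond the sup r_1. *)

definition jl_cubic :: "real \<Rightarrow> real \<Rightarrow> real" where
  "jl_cubic x s = ((x+4)^2 - s) * (x^2 - s) * ((x-4)^2 - s) - ((x-6)*(x-2)*(x+2))^2"

lemma jl_cubic_pos_of_nonpos:
  fixes x s :: real
  assumes x: "x \<ge> 15" and s: "s \<le> 0"
  shows "jl_cubic x s > 0"
proof -
  define t where "t = x - 15"
  have t: "t \<ge> 0" and xt: "x = t + 15" using x by (simp_all add: t_def)
  have "(x+4)^2 * x^2 * (x-4)^2 \<le> ((x+4)^2 - s) * (x^2 - s) * ((x-4)^2 - s)"
    using s zero_le_power2[of "x+4"] zero_le_power2[of x] zero_le_power2[of "x-4"]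
    by (intro mult_mono mult_nonneg_nonneg) linarith+
  moreover have "(x+4)^2 * x^2 * (x-4)^2 - ((x-6)*(x-2)*(x+2))^2
      = (2*t^3 + 84*t^2 + 1150*t + 5124) * (6*t^2 + 168*t + 1146)"
    unfolding xt by algebra
  moreover have "(2*t^3 + 84*t^2 + 1150*t + 5124) * (6*t^2 + 168*t + 1146) > 0"
    using t by (intro mult_pos_pos) (simp_all add: add_nonneg_pos)
  ultimately show ?thesis unfolding jl_cubic_def by linarith
qed

lemma jl_cubic_product_le:
  fixes x s :: real
  assumes x: "x \<ge> 0" and s: "(x-4)^2 < s"
  shows "((x+4)^2 - s) * (x^2 - s) * ((x-4)^2 - s) \<le> (4*x+8)^2 * (16*x)"
proof -
  have split: "((x+4)^2 - s) * (x^2 - s) * ((x-4)^2 - s) = ((x+4)^2 - s) * (s - x^2) * (s - (x-4)^2)"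
    by algebra
  \<comment> \<open>AM-GM: the first two factors sum to \<open>8 x + 16\<close>\<close>
  have "((x+4)^2 - s) * (s - x^2) = (4*x+8)^2 - (s - (x^2+4*x+8))^2"
    by algebra
  then have first: "((x+4)^2 - s) * (s - x^2) \<le> (4*x+8)^2" by simp
  have "((x+4)^2 - s) * (s - x^2) * (s - (x-4)^2) \<le> (4*x+8)^2 * (16*x)"
  proof (cases "((x+4)^2 - s) * (s - x^2) \<le> 0")
    case True
    have "((x+4)^2 - s) * (s - x^2) * (s - (x-4)^2) \<le> 0"
      by (rule mult_nonpos_nonneg[OF True]) (use s in simp)
    moreover have "0 \<le> (4*x+8)^2 * (16*x)" using x by simp
    ultimately show ?thesis by linarith
  next
    case False
    have "x^2 \<le> (x+4)^2" using x by (intro power_mono) auto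
    then have "s < (x+4)^2"
      using False by (cases "s < (x+4)^2") (auto intro: mult_nonpos_nonneg)
    then have "s - (x-4)^2 \<le> 16*x" by (simp add: power2_eq_square algebra_simps)
    then show ?thesis using first s by (intro mult_mono) auto
  qed
  then show ?thesis unfolding split .
qed

lemma jl_cubic_neg_of_ge:
  fixes x s :: real
  assumes x: "x \<ge> 15" and s: "(x-8)^2 \<le> s"
  shows "jl_cubic x s < 0"
proof -
  define t where "t = x - 15"
  have t: "t \<ge> 0" and xt: "x = t + 15" using x by (simp_all add: t_def)
  consider "s \<le> (x-4)^2" | "(x-4)^2 < s" by linarith
  then show ?thesis
  proof cases
    case 1
    have sq: "(x-8)^2 \<le> (x-4)^2" "(x-4)^2 \<le> x^2" "x^2 \<le> (x+4)^2"
      using x by (intro power_mono; simp)+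
    have "((x+4)^2 - s) * (x^2 - s) * ((x-4)^2 - s)
        \<le> ((x+4)^2 - (x-8)^2) * (x^2 - (x-8)^2) * ((x-4)^2 - (x-8)^2)"
      using 1 s sq by (intro mult_mono) auto
    moreover have "((x-6)*(x-2)*(x+2))^2 - ((x+4)^2 - (x-8)^2) * (x^2 - (x-8)^2) * ((x-4)^2 - (x-8)^2)
        = (t+9) * (t+13) * (t^4 + 56*t^3 + 1154*t^2 + 7264*t + 21)"
      unfolding xt by algebra
    moreover have "(t+9) * (t+13) * (t^4 + 56*t^3 + 1154*t^2 + 7264*t + 21) > 0"
      using t by (intro mult_pos_pos) (simp_all add: add_nonneg_pos)
    ultimately show ?thesis unfolding jl_cubic_def by linarith
  next
    case 2
    have "((x+4)^2 - s) * (x^2 - s) * ((x-4)^2 - s) \<le> (4*x+8)^2 * (16*x)"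
      using x 2 by (intro jl_cubic_product_le) auto
    moreover have "((x-6)*(x-2)*(x+2))^2 - (4*x+8)^2 * (16*x)
        = (t+17)^2 * (t^4 + 44*t^3 + 718*t^2 + 4892*t + 9849)"
      unfolding xt by algebra
    moreover have "(t+17)^2 * (t^4 + 44*t^3 + 718*t^2 + 4892*t + 9849) > 0"
      using t by (intro mult_pos_pos) (simp_all add: add_nonneg_pos)
    ultimately show ?thesis unfolding jl_cubic_def by linarith
  qed
qed

lemma jl_cubic_root_bounds:
  fixes x s :: real
  assumes "x \<ge> 15" and "jl_cubic x s = 0"
  shows "0 < s" and "s < (x-8)^2"
  using assms jl_cubic_pos_of_nonpos[of x s] jl_cubic_neg_of_ge[of x s] by force+

lemma cardano_depressed_cubic:
  fixes a k q :: real
  assumes "k^2 = a^2 - q^3"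
  defines "z \<equiv> root 3 (a + k) + root 3 (a - k)"
  shows "z^3 - 3*q*z - 2*a = 0"
proof -
  define u v where "u = root 3 (a + k)" and "v = root 3 (a - k)"
  have u3: "u^3 = a + k" and v3: "v^3 = a - k"
    unfolding u_def v_def by (simp_all add: odd_real_root_pow)
  have "(a + k) * (a - k) = q^3" using assms(1) by algebra
  then have uv: "u * v = q"
    unfolding u_def v_def real_root_mult[symmetric] by (simp add: odd_real_root_power_cancel)
  have "z^3 = u^3 + v^3 + 3 * (u * v) * z" unfolding z_def u_def[symmetric] v_def[symmetric]
    by algebra
  then show ?thesis using u3 v3 uv by simp
qed

lemma K1_square:
  assumes "n \<ge> 15"
  shows "(K1 n)^2 = (K0 n)^2 - (192 * (real n)^2 + 256)^3"
proof -
  define t where "t = real n - 15"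
  have t: "t \<ge> 0" and xt: "real n = t + 15" using assms by (simp_all add: t_def)
  have "(2 * K0 n)^2 - 4 * (192 * (real n)^2 + 256)^3
     = 10214160759983817 + 10585461850409628*t + 4894534148604354*t^2 + 1347076448060364*t^3
       + 246965545626615*t^4 + 31863611628216*t^5 + 2971699904988*t^6 + 202081266936*t^7
       + 9951685191*t^8 + 346289580*t^9 + 8084610*t^10 + 113724*t^11 + 729*t^12"
    unfolding K0_def Let_def xt by algebra
  also have "\<dots> \<ge> 0" using t by simp
  finally show ?thesis unfolding K1_def Let_def by (simp add: power_divide)
qed

text \<open>Substituting \<open>z = 3 s - 3 n\<^sup>2 - 32\<close> turns \<open>-27 jl_cubic n s\<close> into the depressed cubic
  solved by Cardano's formula in \<open>pJL\<close>; the square root there is \<open>sqrt 3\<close> times the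
  square root of this root.\<close>
definition jl_root :: "nat \<Rightarrow> real" where
  "jl_root n = (root 3 (K0 n + K1 n) + root 3 (K0 n - K1 n) + 3 * (real n)^2 + 32) / 3"

lemma jl_cubic_jl_root:
  assumes "n \<ge> 15"
  shows "jl_cubic (real n) (jl_root n) = 0"
proof -
  define x where "x = real n"
  define z where "z = root 3 (K0 n + K1 n) + root 3 (K0 n - K1 n)"
  have K0: "2 * K0 n = -27*x^6 + 324*x^5 - 756*x^4 - 2592*x^3 + 25776*x^2 + 5184*x - 23744"
    unfolding K0_def Let_def x_def by simp
  have "z^3 - 3 * (192 * x^2 + 256) * z - 2 * K0 n = 0"
    unfolding z_def x_def by (rule cardano_depressed_cubic[OF K1_square[OF assms]])
  moreover have "z^3 - 3 * (192 * x^2 + 256) * z - 2 * K0 n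
      = -27 * jl_cubic x ((z + 3 * x^2 + 32) / 3)"
    unfolding jl_cubic_def K0 by algebra
  ultimately show ?thesis unfolding jl_root_def z_def x_def by simp
qed

lemma jl_root_bounds:
  assumes "n \<ge> 15"
  shows "0 < jl_root n" and "sqrt (jl_root n) < real n - 8"
proof -
  have "real n \<ge> 15" using assms by simp
  note bounds = jl_cubic_root_bounds[OF this jl_cubic_jl_root[OF assms]]
  show "0 < jl_root n" by (fact bounds(1))
  have "sqrt (jl_root n) < sqrt ((real n - 8)^2)"
    using bounds(2) by (simp only: real_sqrt_less_iff)
  then show "sqrt (jl_root n) < real n - 8" using assms by simp
qed

lemma pJL_eq_jl_root:
  "pJL n = (real n + 4 - sqrt (jl_root n)) / (real n - 8 - sqrt (jl_root n))"
proof -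
  have "sqrt (root 3 (K0 n + K1 n) + root 3 (K0 n - K1 n) + 3 * (real n)^2 + 32)
      = sqrt 3 * sqrt (jl_root n)"
    unfolding jl_root_def real_sqrt_mult[symmetric] by simp
  then have "pJL n = (sqrt 3 * (real n + 4 - sqrt (jl_root n))) / (sqrt 3 * (real n - 8 - sqrt (jl_root n)))"
    unfolding pJL_def Let_def by (simp add: algebra_simps)
  then show ?thesis by simp
qed

lemma mexp_eq_jl_root:
  assumes "n \<ge> 15"
  shows "mexp n = (real n - 8 - sqrt (jl_root n)) / 2"
  using jl_root_bounds(2)[OF assms]
  unfolding mexp_def pJL_eq_jl_root by (simp add: field_simps)

lemma mexp_pos:
  assumes "n \<ge> 15"
  shows "0 < mexp n"
  using jl_root_bounds(2)[OF assms] by (simp add: mexp_eq_jl_root[OF assms])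

lemma mexp_less:
  assumes "n \<ge> 15"
  shows "mexp n < (real n - 6) / 2"
  using real_sqrt_ge_zero[OF less_imp_le[OF jl_root_bounds(1)[OF assms]]]
  unfolding mexp_eq_jl_root[OF assms] by (intro divide_strict_right_mono) linarith+

lemma pJL_eq_mexp:
  assumes "n \<ge> 15"
  shows "pJL n = (mexp n + 6) / mexp n"
proof -
  have "real n - 8 - sqrt (jl_root n) \<noteq> 0" using jl_root_bounds(2)[OF assms] by simp
  then show ?thesis unfolding pJL_eq_jl_root mexp_eq_jl_root[OF assms] by (simp add: field_simps)
qed

lemma mexp_mult_pJL: "n \<ge> 15 \<Longrightarrow> mexp n * (pJL n - 1) = 6"
  using mexp_pos[of n] by (simp add: pJL_eq_mexp field_simps)

lemma pJL_gt_1: "n \<ge> 15 \<Longrightarrow> 1 < pJL n"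
  using mexp_pos[of n] by (simp add: pJL_eq_mexp field_simps)

text \<open>In \<open>\<real>\<^sup>n\<close>, \<open>(-\<Delta>)\<^sup>3 r\<^sup>-\<^sup>a = triharmonic_symbol n a * r\<^sup>-\<^sup>a\<^sup>-\<^sup>6\<close>.\<close>
definition triharmonic_symbol :: "real \<Rightarrow> real \<Rightarrow> real" where
  "triharmonic_symbol x a = a*(a+2)*(a+4)*(x-2-a)*(x-4-a)*(x-6-a)"

lemma triharmonic_symbol_pos: "0 < a \<Longrightarrow> a < x - 6 \<Longrightarrow> 0 < triharmonic_symbol x a"
  unfolding triharmonic_symbol_def by (intro mult_pos_pos) auto

lemma triharmonic_symbol_even:
  "triharmonic_symbol (2*c + 6) (c + y) = (c^2 - y^2) * ((c+2)^2 - y^2) * ((c+4)^2 - y^2)"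
  unfolding triharmonic_symbol_def by algebra

lemma triharmonic_symbol_less_centre:
  fixes x a :: real
  assumes a: "0 < a" "a < (x-6)/2"
  shows "triharmonic_symbol x a < triharmonic_symbol x ((x-6)/2)"
proof -
  define c y where "c = (x-6)/2" and "y = a - c"
  have xa: "x = 2*c + 6" "a = c + y" by (simp_all add: c_def y_def field_simps)
  have c: "c > 0" using a by (simp add: c_def)
  have "\<bar>y\<bar> < c" "y \<noteq> 0" using a unfolding c_def y_def abs_less_iff by linarith+
  then have y: "0 < y^2" "y^2 < c^2" by (auto intro: power2_strict_mono[of "\<bar>y\<bar>", simplified])
  have sq: "c^2 \<le> (c+2)^2" "(c+2)^2 \<le> (c+4)^2" using c by (intro power_mono; simp)+
  with y have y_le: "y^2 \<le> (c+2)^2" "y^2 \<le> (c+4)^2" by linarith+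
  have "triharmonic_symbol x a = (c^2 - y^2) * ((c+2)^2 - y^2) * ((c+4)^2 - y^2)"
    unfolding xa by (rule triharmonic_symbol_even)
  also have "\<dots> < c^2 * (c+2)^2 * (c+4)^2"
    using y y_le c by (intro mult_strict_mono) auto
  also have "\<dots> = triharmonic_symbol x ((x-6)/2)"
    using triharmonic_symbol_even[of c 0] unfolding xa(1) by simp
  finally show ?thesis .
qed

lemma triharmonic_symbol_centre:
  "64 * triharmonic_symbol x ((x-6)/2) = ((x-6)*(x-2)*(x+2))^2"
proof -
  define c where "c = (x-6)/2"
  have x: "x = 2*c + 6" by (simp add: c_def field_simps)
  have "64 * triharmonic_symbol x ((x-6)/2) = 64 * (c^2 * (c+2)^2 * (c+4)^2)"
    using triharmonic_symbol_even[of c 0] unfolding x by simp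
  also have "\<dots> = ((x-6)*(x-2)*(x+2))^2" unfolding x by algebra
  finally show ?thesis .
qed

lemma triharmonic_symbol_mexp_pos: "n \<ge> 15 \<Longrightarrow> 0 < triharmonic_symbol (real n) (mexp n)"
  using mexp_pos[of n] mexp_less[of n] by (intro triharmonic_symbol_pos) auto

lemma Lc_powr:
  assumes "n \<ge> 15"
  shows "Lc n powr (pJL n - 1) = triharmonic_symbol (real n) (mexp n)"
  using triharmonic_symbol_mexp_pos[OF assms] pJL_gt_1[OF assms]
  unfolding Lc_def Let_def triharmonic_symbol_def by (simp add: powr_powr)

lemma Lc_pos: "n \<ge> 15 \<Longrightarrow> 0 < Lc n"
  using triharmonic_symbol_mexp_pos[of n] unfolding Lc_def Let_def triharmonic_symbol_def[symmetric] by simp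

lemma pJL_mult_triharmonic_symbol:
  assumes "n \<ge> 15"
  shows "pJL n * triharmonic_symbol (real n) (mexp n) = triharmonic_symbol (real n) ((real n - 6)/2)"
proof -
  define x m where "x = real n" and "m = mexp n"
  have "sqrt (jl_root n) = x - 8 - 2*m"
    using mexp_eq_jl_root[OF assms] by (simp add: x_def m_def)
  then have "jl_root n = (x - 8 - 2*m)^2"
    using jl_root_bounds(1)[OF assms] by (metis less_imp_le real_sqrt_pow2)
  then have cubic: "jl_cubic x ((x - 8 - 2*m)^2) = 0"
    using jl_cubic_jl_root[OF assms] by (simp add: x_def)
  have "pJL n * m = m + 6" using pJL_eq_mexp[OF assms] mexp_pos[OF assms] by (simp add: m_def)
  moreover have "pJL n * triharmonic_symbol x m = (pJL n * m) * ((m+2)*(m+4)*(x-2-m)*(x-4-m)*(x-6-m))"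
    unfolding triharmonic_symbol_def by (simp only: mult.assoc)
  ultimately have "64 * (pJL n * triharmonic_symbol x m)
      = 64 * ((m+6)*((m+2)*(m+4)*(x-2-m)*(x-4-m)*(x-6-m)))"
    by simp
  \<comment> \<open>with \<open>\<sigma> = x - 8 - 2 m\<close> the six factors pair up as \<open>(x + 4 \<plusminus> \<sigma>)/2\<close>, \<open>(x \<plusminus> \<sigma>)/2\<close>, \<open>(x - 4 \<plusminus> \<sigma>)/2\<close>\<close>
  also have "\<dots> = ((x+4)^2 - (x-8-2*m)^2) * (x^2 - (x-8-2*m)^2) * ((x-4)^2 - (x-8-2*m)^2)"
    by algebra
  also have "\<dots> = ((x-6)*(x-2)*(x+2))^2"
    using cubic unfolding jl_cubic_def by simp
  also have "\<dots> = 64 * triharmonic_symbol x ((x-6)/2)"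
    by (rule triharmonic_symbol_centre[symmetric])
  finally show ?thesis unfolding x_def m_def by simp
qed

lemma Ppoly_eq:
  assumes "n \<ge> 15"
  shows "Ppoly n lam
    = triharmonic_symbol (real n) (mexp n + lam) - pJL n * triharmonic_symbol (real n) (mexp n)"
  unfolding Ppoly_def Let_def Lc_powr[OF assms] by (simp add: triharmonic_symbol_def algebra_simps)

lemma lexp_eq:
  assumes "n \<ge> 15"
  shows "lexp n = (real n - 6)/2"
proof -
  have "lam3 n = (real n - 6)/2 - mexp n"
    unfolding lam3_def
  proof (rule Least_equality)
    show "(real n - 6)/2 - mexp n > 0 \<and> Ppoly n ((real n - 6)/2 - mexp n) = 0"
      using mexp_less[OF assms] by (simp add: Ppoly_eq[OF assms] pJL_mult_triharmonic_symbol[OF assms])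
  next
    fix lam assume lam: "lam > 0 \<and> Ppoly n lam = 0"
    show "(real n - 6)/2 - mexp n \<le> lam"
    proof (rule ccontr)
      assume "\<not> ?thesis"
      then have "triharmonic_symbol (real n) (mexp n + lam) < triharmonic_symbol (real n) ((real n - 6)/2)"
        using lam mexp_pos[OF assms] by (intro triharmonic_symbol_less_centre) linarith+
      then show False
        using lam by (simp add: Ppoly_eq[OF assms] pJL_mult_triharmonic_symbol[OF assms])
    qed
  qed
  then show ?thesis unfolding lexp_def by simp
qed

definition powr_log_sum :: "real \<Rightarrow> real \<Rightarrow> real \<Rightarrow> real \<Rightarrow> real \<Rightarrow> real \<Rightarrow> real \<Rightarrow> real" where
  "powr_log_sum R A \<alpha> B C \<beta> r = A * r powr (-\<alpha>) + B * r powr (-\<beta>) + C * r powr (-\<beta>) * ln (r/R)"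

lemma powr_minus_add_one: "r > 0 \<Longrightarrow> r powr (-(a+1)) = r powr (-a) / (r::real)"
  by (simp add: powr_diff minus_add_distrib)

lemma has_real_derivative_powr_log_sum:
  assumes "r > 0" and "R > 0"
  shows "(powr_log_sum R A \<alpha> B C \<beta> has_real_derivative
           powr_log_sum R (-A*\<alpha>) (\<alpha>+1) (C - B*\<beta>) (-C*\<beta>) (\<beta>+1) r) (at r)"
proof -
  define D where "D = A * (-\<alpha> * r powr (-\<alpha> - 1)) + B * (-\<beta> * r powr (-\<beta> - 1))
      + C * ((-\<beta> * r powr (-\<beta> - 1)) * ln (r/R) + r powr (-\<beta>) * (1/r))"
  have deriv: "(powr_log_sum R A \<alpha> B C \<beta> has_real_derivative D) (at r)"
    unfolding powr_log_sum_def[abs_def] D_def using assms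
    by (auto intro!: derivative_eq_intros simp: field_simps)
  have "r powr (-a - 1) = r powr (-a) / r" for a
    using powr_minus_add_one[OF assms(1), of a] by (simp add: minus_add_distrib)
  then have "D = powr_log_sum R (-A*\<alpha>) (\<alpha>+1) (C - B*\<beta>) (-C*\<beta>) (\<beta>+1) r"
    unfolding D_def powr_log_sum_def powr_minus_add_one[OF assms(1)] using assms
    by (simp add: field_simps)
  with deriv show ?thesis by simp
qed

lemma rad_lap_powr_log_sum:
  assumes r: "r > 0" and R: "R > 0"
  shows "rad_lap n (powr_log_sum R A \<alpha> B C \<beta>) r =
     powr_log_sum R (A*\<alpha>*(\<alpha>+2-real n)) (\<alpha>+2)
       (-C*\<beta> - (C - B*\<beta>)*(\<beta>+1) + (real n-1)*(C - B*\<beta>)) (C*\<beta>*(\<beta>+2-real n)) (\<beta>+2) r"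
proof -
  define f' where "f' = powr_log_sum R (-A*\<alpha>) (\<alpha>+1) (C - B*\<beta>) (-C*\<beta>) (\<beta>+1)"
  define f'' where "f'' = powr_log_sum R (-(-A*\<alpha>)*(\<alpha>+1)) (\<alpha>+1+1)
    ((-C*\<beta>) - (C - B*\<beta>)*(\<beta>+1)) (-(-C*\<beta>)*(\<beta>+1)) (\<beta>+1+1)"
  have d1: "deriv (powr_log_sum R A \<alpha> B C \<beta>) y = f' y" if "y > 0" for y
    unfolding f'_def by (rule DERIV_imp_deriv[OF has_real_derivative_powr_log_sum[OF that R]])
  have "(f' has_real_derivative f'' r) (at r)"
    unfolding f'_def f''_def by (rule has_real_derivative_powr_log_sum[OF r R])
  then have "(deriv (powr_log_sum R A \<alpha> B C \<beta>) has_real_derivative f'' r) (at r)"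
    by (rule has_field_derivative_transform_within_open[where S="{0<..}"]) (use r d1 in auto)
  then have "rad_lap n (powr_log_sum R A \<alpha> B C \<beta>) r = f'' r + (real n - 1) / r * f' r"
    unfolding rad_lap_def d1[OF r] by (simp add: DERIV_imp_deriv)
  also have "\<dots> = powr_log_sum R (A*\<alpha>*(\<alpha>+2-real n)) (\<alpha>+2)
       (-C*\<beta> - (C - B*\<beta>)*(\<beta>+1) + (real n-1)*(C - B*\<beta>)) (C*\<beta>*(\<beta>+2-real n)) (\<beta>+2) r"
  proof -
    have shift2: "r powr (-(a+2)) = r powr (-a) / r / r" for a
      using powr_minus_add_one[OF r, of "a+1"] powr_minus_add_one[OF r, of a] by (simp add: add.assoc)
    show ?thesis
      unfolding f'_def f''_def powr_log_sum_def powr_minus_add_one[OF r] shift2 add.assoc one_add_one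
      using r by (simp add: field_simps)
  qed
  finally show ?thesis .
qed

lemma u_out_eq_powr_log_sum: "u_out n b R = powr_log_sum R (Lc n) (mexp n) 0 (-b) (lexp n)"
  by (rule ext) (simp add: u_out_def powr_log_sum_def)

lemma v_out_eq_powr_log_sum:
  "v_out n b R = powr_log_sum R (mexp n * (real n - 2 - mexp n) * Lc n) (mexp n + 2)
     ((real n - 2 - 2 * lexp n) * b) (- lexp n * (real n - 2 - lexp n) * b) (lexp n + 2)"
  by (rule ext) (simp add: v_out_def powr_log_sum_def Let_def algebra_simps)

lemma w_out_eq_powr_log_sum:
  "w_out n b R = powr_log_sum R
     (mexp n * (mexp n + 2) * (real n - 2 - mexp n) * (real n - 4 - mexp n) * Lc n) (mexp n + 4)
     ((real n - 2 - 2 * lexp n) * (lexp n + 2) * (real n - 4 - lexp n) * b)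
     (- lexp n * (lexp n + 2) * (real n - 2 - lexp n) * (real n - 4 - lexp n) * b) (lexp n + 4)"
  by (rule ext) (simp add: w_out_def powr_log_sum_def Let_def algebra_simps)

lemma rad_lap_u_out:
  assumes "r > 0" and "R > 0"
  shows "- rad_lap n (u_out n b R) r = v_out n b R r"
  unfolding u_out_eq_powr_log_sum v_out_eq_powr_log_sum rad_lap_powr_log_sum[OF assms]
  by (simp add: powr_log_sum_def algebra_simps)

lemma rad_lap_v_out:
  assumes "n \<ge> 15" and "r > 0" and "R > 0"
  shows "- rad_lap n (v_out n b R) r = w_out n b R r"
proof -
  have n: "real n = 2 * lexp n + 6" using lexp_eq[OF assms(1)] by simp
  show ?thesis
    unfolding v_out_eq_powr_log_sum w_out_eq_powr_log_sum rad_lap_powr_log_sum[OF assms(2,3)]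
    by (simp add: powr_log_sum_def add.assoc n algebra_simps)
qed

lemma rad_lap_w_out:
  assumes "n \<ge> 15" and "r > 0" and "R > 0"
  shows "- rad_lap n (w_out n b R) r = triharmonic_symbol (real n) (mexp n)
           * (Lc n * r powr (- mexp n - 6) - pJL n * b * r powr (- lexp n - 6) * ln (r/R))"
proof -
  have n: "real n = 2 * lexp n + 6" using lexp_eq[OF assms(1)] by simp
  have "- rad_lap n (w_out n b R) r = triharmonic_symbol (real n) (mexp n) * Lc n * r powr (- mexp n - 6)
      - triharmonic_symbol (real n) (lexp n) * b * r powr (- lexp n - 6) * ln (r/R)"
    unfolding w_out_eq_powr_log_sum rad_lap_powr_log_sum[OF assms(2,3)]
    by (simp add: powr_log_sum_def triharmonic_symbol_def n algebra_simps)
  also have "triharmonic_symbol (real n) (lexp n) = pJL n * triharmonic_symbol (real n) (mexp n)"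
    unfolding lexp_eq[OF assms(1)] by (rule pJL_mult_triharmonic_symbol[OF assms(1), symmetric])
  finally show ?thesis by (simp add: algebra_simps)
qed

lemma powr_ge_tangent:
  fixes p a x :: real
  assumes "p \<ge> 1" and "a > 0" and "x > 0"
  shows "a powr p + p * a powr (p - 1) * (x - a) \<le> x powr p"
proof -
  have "p * a powr (p - 1) * (x - a) \<le> x powr p - a powr p"
    by (rule convex_on_imp_above_tangent[OF powr_convex[OF assms(1)]])
       (use assms in \<open>auto simp: interior_open intro!: has_field_derivative_at_within has_real_derivative_powr\<close>)
  then show ?thesis by simp
qed

lemma u_out_powr_ge:
  assumes n: "n \<ge> 15" and r: "r > 0" and u: "u_out n b R r > 0"
  shows "triharmonic_symbol (real n) (mexp n)
           * (Lc n * r powr (- mexp n - 6) - pJL n * b * r powr (- lexp n - 6) * ln (r/R))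
         \<le> u_out n b R r powr pJL n"
proof -
  define p S q where "p = pJL n" and "S = triharmonic_symbol (real n) (mexp n)"
    and "q = Lc n * r powr (- mexp n)"
  have q: "q > 0" using Lc_pos[OF n] r by (simp add: q_def)
  have "q powr (p - 1) = Lc n powr (p - 1) * r powr (- (mexp n * (p - 1)))"
    using Lc_pos[OF n] r by (simp add: q_def p_def powr_mult powr_powr)
  then have q1: "q powr (p - 1) = S * r powr (-6)"
    using Lc_powr[OF n] mexp_mult_pJL[OF n] by (simp add: p_def S_def)
  have qp: "q powr p = q * q powr (p - 1)"
    using q powr_add[of q 1 "p - 1"] by simp
  have "q powr p + p * q powr (p - 1) * (u_out n b R r - q) \<le> u_out n b R r powr p"
    using powr_ge_tangent[OF less_imp_le[OF pJL_gt_1[OF n]] q u] by (simp add: p_def)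
  moreover have "q powr p + p * q powr (p - 1) * (u_out n b R r - q)
      = S * (Lc n * r powr (- mexp n - 6) - p * b * r powr (- lexp n - 6) * ln (r/R))"
    unfolding qp q1 using r
    by (simp add: q_def u_out_def powr_add[symmetric] algebra_simps)
  ultimately show ?thesis by (simp add: p_def S_def)
qed

theorem lemma4p2:
  fixes n :: nat and b R :: real
  assumes "n \<ge> 15" and "b > 0" and "R > 0"
    and "{r. r > 0 \<and> u_out n b R r \<le> 0} \<noteq> {}" and "bdd_above {r. r > 0 \<and> u_out n b R r \<le> 0}"
    and "{r. r > 0 \<and> v_out n b R r \<le> 0} \<noteq> {}" and "bdd_above {r. r > 0 \<and> v_out n b R r \<le> 0}"
    and "{r. r > 0 \<and> w_out n b R r \<le> 0} \<noteq> {}" and "bdd_above {r. r > 0 \<and> w_out n b R r \<le> 0}"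
    and "R < Sup {r. r > 0 \<and> u_out n b R r \<le> 0}"
    and "Sup {r. r > 0 \<and> u_out n b R r \<le> 0} < Sup {r. r > 0 \<and> v_out n b R r \<le> 0}"
    and "Sup {r. r > 0 \<and> v_out n b R r \<le> 0} < Sup {r. r > 0 \<and> w_out n b R r \<le> 0}"
  shows "(\<forall>r>0. - rad_lap n (u_out n b R) r = v_out n b R r)
       \<and> (\<forall>r>0. - rad_lap n (v_out n b R) r = w_out n b R r)
       \<and> (\<forall>r > Sup {r. r > 0 \<and> u_out n b R r \<le> 0}.
            - rad_lap n (w_out n b R) r \<le> (u_out n b R r) powr (pJL n))"
proof (intro conjI allI impI)
  fix r :: real
  assume "r > 0"
  then show "- rad_lap n (u_out n b R) r = v_out n b R r"
    and "- rad_lap n (v_out n b R) r = w_out n b R r"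
    using rad_lap_u_out rad_lap_v_out assms(1,3) by blast+
next
  fix r :: real
  assume r1: "r > Sup {r. r > 0 \<and> u_out n b R r \<le> 0}"
  then have r: "r > 0" using assms(3,10) by linarith
  have "u_out n b R r > 0"
  proof (rule ccontr)
    assume "\<not> u_out n b R r > 0"
    with r have "r \<le> Sup {r. r > 0 \<and> u_out n b R r \<le> 0}"
      by (intro cSup_upper[OF _ assms(5)]) simp
    with r1 show False by simp
  qed
  then show "- rad_lap n (w_out n b R) r \<le> u_out n b R r powr pJL n"
    unfolding rad_lap_w_out[OF assms(1) r assms(3)] by (rule u_out_powr_ge[OF assms(1) r])
qed

end
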